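(* Let $g_2,g_3\in\mathbb{R}$ with $\Delta=g_2^3-27g_3^2>0$, and let $w$ (real, $w>0$) and $w'$ (purely imaginary, $\mathrm{Im}\,w'>0$) be the fundamental half-periods of the associated Weierstrass functions. Define \[ \widetilde{\Psi}_x(k)=\frac{\sigma(x+k+w')}{\sigma(x+w')\sigma(k)}e^{-\zeta(k)x-\zeta(w')k},\qquad \widetilde{\Psi}_x(k,l)=\frac{\sigma(x+k+l+w')}{\sigma(x+w')\sigma(k+l)}e^{-(\zeta(k)+\zeta(l))x-\zeta(w')(k+l)}. \] Then $\widetilde{\Psi}_x(k)$ and $\widetilde{\Psi}_x(k,l)$ are real-valued (wherever defined) when $x,k,l\in\mathbb{R}$.
   Context: $\sigma,\zeta,\wp$ are the Weierstrass sigma, zeta and elliptic functions with invariants $g_2,g_3$, i.e. $(\wp')^2=4\wp^3-g_2\wp-g_3$, $\zeta=\sigma'/\sigma$, $\wp=-\zeta'$, with period lattice generated by $2w,2w'$. *)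

theory Defs
  imports "HOL-Analysis.Analysis"
begin

definition lattice :: "complex \<Rightarrow> complex \<Rightarrow> complex set" where
  "lattice w w' = {2 * of_int m * w + 2 * of_int n * w' | m n. True}"

text \<open>Weierstrass sigma function of the lattice generated by 2w, 2w', defined by its
  Weierstrass product, taken as the limit over the squares |m|,|n| <= N
  (the product converges absolutely, so this is the usual sigma function).\<close>
definition wsigma :: "complex \<Rightarrow> complex \<Rightarrow> complex \<Rightarrow> complex" where
  "wsigma w w' z = lim (\<lambda>N::nat. z *
     (\<Prod>\<omega> \<in> {2 * of_int m * w + 2 * of_int n * w' | m n. \<bar>m\<bar> \<le> int N \<and> \<bar>n\<bar> \<le> int N} - {0}.
        (1 - z / \<omega>) * exp (z / \<omega> + z\<^sup>2 / (2 * \<omega>\<^sup>2))))"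

definition wzeta :: "complex \<Rightarrow> complex \<Rightarrow> complex \<Rightarrow> complex" where
  "wzeta w w' z = deriv (wsigma w w') z / wsigma w w' z"

definition wp :: "complex \<Rightarrow> complex \<Rightarrow> complex \<Rightarrow> complex" where
  "wp w w' z = - deriv (wzeta w w') z"

definition Psi1 :: "complex \<Rightarrow> complex \<Rightarrow> complex \<Rightarrow> complex \<Rightarrow> complex" where
  "Psi1 w w' x k =
     wsigma w w' (x + k + w') / (wsigma w w' (x + w') * wsigma w w' k)
     * exp (- wzeta w w' k * x - wzeta w w' w' * k)"

definition Psi2 :: "complex \<Rightarrow> complex \<Rightarrow> complex \<Rightarrow> complex \<Rightarrow> complex \<Rightarrow> complex" where
  "Psi2 w w' x k l =
     wsigma w w' (x + k + l + w') / (wsigma w w' (x + w') * wsigma w w' (k + l))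
     * exp (- (wzeta w w' k + wzeta w w' l) * x - wzeta w w' w' * (k + l))"

end

theory Submission
  imports Defs "HOL-Complex_Analysis.Complex_Analysis"
begin

(*
  The lattice is stable under z \<mapsto> -z and under complex conjugation, so the product
  defining sigma (which converges locally uniformly once grouped into square shells, the k-th
  shell contributing a factor 1 + O(1/k^2)) satisfies sigma(-z) = -sigma(z) and
  sigma(cnj z) = cnj (sigma z). Hence sigma and zeta are real on the real axis, and
  eta = zeta(w') is purely imaginary.

  The heart of the matter is the quasi-periodicity sigma(z + 2w') = -exp(2 eta (z + w')) sigma(z).
  It is reached through zeta'' = 2 \<Sum> 1/(z - \<omega>)^3: translating a truncated square by 2w'
  changes this absolutely convergent sum only by two boundary rows of total size O(1/N^2),
  so zeta'' is 2w'-periodic. Integrating on the strip -2 Im w' < Im z < 0, which avoids the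
  lattice together with its translate by 2w', and normalising at z = -w' by the oddness of zeta
  makes zeta' periodic, zeta quasi-periodic with constant 2 eta, and finally sigma quasi-periodic.

  For real x and s, conjugation maps sigma(x+s+w') / sigma(x+w') * exp(-eta s) to
  sigma(x+s-w') / sigma(x-w') * exp(eta s), which the quasi-periodicity identifies with the
  original quotient; Psi is this quotient times real factors.
*)

lemma norm_prod_minus_1_le_exp_sum:
  fixes f :: "'a \<Rightarrow> 'b :: {real_normed_div_algebra, comm_ring_1}"
  assumes "finite A"
  shows "norm (prod f A - 1) \<le> exp (\<Sum>i\<in>A. norm (f i - 1)) - 1"
proof -
  obtain g where g: "bij_betw g {..<card A} A"
    using ex_bij_betw_nat_finite[OF assms] by (auto simp: atLeast0LessThan)
  have "norm (prod f A - 1) = norm ((\<Prod>n<card A. 1 + (f (g n) - 1)) - 1)"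
    by (simp add: prod.reindex_bij_betw[OF g])
  also have "\<dots> \<le> (\<Prod>n<card A. 1 + norm (f (g n) - 1)) - 1"
    by (rule norm_prod_minus1_le_prod_minus1)
  also have "\<dots> \<le> exp (\<Sum>n<card A. norm (f (g n) - 1)) - 1"
    by (simp add: prod_le_exp_sum)
  also have "(\<Sum>n<card A. norm (f (g n) - 1)) = (\<Sum>i\<in>A. norm (f i - 1))"
    by (rule sum.reindex_bij_betw[OF g])
  finally show ?thesis .
qed

lemma exp_minus_1_le_mult_exp:
  fixes t :: real
  shows "exp t - 1 \<le> t * exp t"
proof -
  have "(1 - t) * exp t \<le> exp (- t) * exp t"
    using exp_ge_add_one_self[of "- t"] by (intro mult_right_mono) auto
  thus ?thesis by (simp add: algebra_simps exp_minus_inverse)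
qed

lemma summable_exp_inverse_square_minus_1:
  fixes a :: real
  assumes "a \<ge> 0"
  shows "summable (\<lambda>k::nat. exp (a / (real k + 1)^2) - 1)"
proof (rule summable_comparison_test)
  have "summable (\<lambda>k. inverse (real (Suc k) ^ 2))"
    using inverse_power_summable[of 2, where 'a=real] by (subst summable_Suc_iff) simp
  thus "summable (\<lambda>k. a * exp a * inverse (real (Suc k) ^ 2))"
    by (rule summable_mult)
  have "norm (exp (a / (real k + 1)^2) - 1) \<le> a * exp a * inverse (real (Suc k) ^ 2)" for k
  proof -
    have "1 \<le> (real k + 1)^2"
      by simp
    hence t: "0 \<le> a / (real k + 1)^2" "a / (real k + 1)^2 \<le> a"
      using assms by (auto simp: divide_le_eq mult_le_cancel_left1)
    have "norm (exp (a / (real k + 1)^2) - 1) = exp (a / (real k + 1)^2) - 1"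
      using t by simp
    also have "\<dots> \<le> a / (real k + 1)^2 * exp (a / (real k + 1)^2)"
      by (rule exp_minus_1_le_mult_exp)
    also have "\<dots> \<le> a / (real k + 1)^2 * exp a"
      using t by (intro mult_left_mono) auto
    finally show ?thesis by (simp add: field_simps)
  qed
  thus "\<exists>N. \<forall>k\<ge>N. norm (exp (a / (real k + 1)^2) - 1) \<le> a * exp a * inverse (real (Suc k) ^ 2)"
    by blast
qed

lemma deriv_odd_function:
  fixes f :: "complex \<Rightarrow> complex"
  assumes odd: "\<And>z. f (- z) = - f z" and "f field_differentiable at z"
  shows "deriv f (- z) = deriv f z"
proof -
  have "(f has_field_derivative deriv f z) (at (- (- z)))"
    using assms(2) by (simp add: DERIV_deriv_iff_field_differentiable)
  from DERIV_chain2[OF this DERIV_minus[OF DERIV_ident]]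
  have "((\<lambda>u. - f (- u)) has_field_derivative deriv f z) (at (- z))"
    using DERIV_minus by fastforce
  moreover have "(\<lambda>u. - f (- u)) = f"
    using odd by (simp add: fun_eq_iff)
  ultimately show ?thesis
    by (simp add: DERIV_imp_deriv)
qed

lemma deriv_cnj_symmetric:
  fixes f :: "complex \<Rightarrow> complex"
  assumes sym: "\<And>z. f (cnj z) = cnj (f z)" and "f field_differentiable at z"
  shows "deriv f (cnj z) = cnj (deriv f z)"
proof -
  have "(f has_field_derivative deriv f z) (at (cnj (cnj z)))"
    using assms(2) by (simp add: DERIV_deriv_iff_field_differentiable)
  from has_field_derivative_cnj_cnj[OF this]
  have "((cnj \<circ> f \<circ> cnj) has_field_derivative cnj (deriv f z)) (at (cnj z))" .
  moreover have "cnj \<circ> f \<circ> cnj = f"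
    using sym by (simp add: fun_eq_iff)
  ultimately show ?thesis
    by (simp add: DERIV_imp_deriv)
qed

lemma deriv2_logderiv:
  fixes f :: "complex \<Rightarrow> complex"
  assumes holo: "f holomorphic_on U" and U: "open U" "z \<in> U" and nz: "\<And>y. y \<in> U \<Longrightarrow> f y \<noteq> 0"
  defines "f1 \<equiv> deriv f" and "f2 \<equiv> deriv (deriv f)" and "f3 \<equiv> deriv (deriv (deriv f))"
  shows "deriv (deriv (\<lambda>y. deriv f y / f y)) z
           = (f3 z * f z ^ 2 - 3 * f z * f1 z * f2 z + 2 * f1 z ^ 3) / f z ^ 3"
proof -
  have h1: "f1 holomorphic_on U" and h2: "f2 holomorphic_on U"
    unfolding f1_def f2_def using holo U by (auto intro!: holomorphic_deriv)
  have d0: "(f has_field_derivative f1 y) (at y)"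
   and d1: "(f1 has_field_derivative f2 y) (at y)"
   and d2: "(f2 has_field_derivative f3 y) (at y)" if "y \<in> U" for y
    unfolding f1_def f2_def f3_def
    using holomorphic_derivI[OF holo U(1) that] holomorphic_derivI[OF h1 U(1) that]
          holomorphic_derivI[OF h2 U(1) that] by (simp_all add: f1_def f2_def)
  have "eventually (\<lambda>y. deriv (\<lambda>y. f1 y / f y) y = (f2 y * f y - f1 y * f1 y) / (f y * f y)) (nhds z)"
    using eventually_nhds_in_open[OF U]
    by eventually_elim (intro DERIV_imp_deriv DERIV_divide d0 d1 nz)
  hence "deriv (deriv (\<lambda>y. f1 y / f y)) z = deriv (\<lambda>y. (f2 y * f y - f1 y * f1 y) / (f y * f y)) z"
    by (rule deriv_cong_ev) simp
  also have "\<dots> = (f3 z * f z ^ 2 - 3 * f z * f1 z * f2 z + 2 * f1 z ^ 3) / f z ^ 3"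
  proof (rule DERIV_imp_deriv)
    have numerator: "((\<lambda>y. f2 y * f y - f1 y * f1 y) has_field_derivative
               (f3 z * f z + f1 z * f2 z) - (f2 z * f1 z + f2 z * f1 z)) (at z)"
      by (intro DERIV_diff DERIV_mult d0 d1 d2 U(2))
    have denominator: "((\<lambda>y. f y * f y) has_field_derivative (f1 z * f z + f1 z * f z)) (at z)"
      by (intro DERIV_mult d0 U(2))
    have "((\<lambda>y. (f2 y * f y - f1 y * f1 y) / (f y * f y)) has_field_derivative
       (((f3 z * f z + f1 z * f2 z) - (f2 z * f1 z + f2 z * f1 z)) * (f z * f z) -
        (f2 z * f z - f1 z * f1 z) * (f1 z * f z + f1 z * f z)) / (f z * f z * (f z * f z))) (at z)"
      using nz[OF U(2)] by (intro DERIV_divide numerator denominator) simp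
    moreover have "(((f3 z * f z + f1 z * f2 z) - (f2 z * f1 z + f2 z * f1 z)) * (f z * f z) -
        (f2 z * f z - f1 z * f1 z) * (f1 z * f z + f1 z * f z)) / (f z * f z * (f z * f z))
        = (f3 z * f z ^ 2 - 3 * f z * f1 z * f2 z + 2 * f1 z ^ 3) / f z ^ 3"
      using nz[OF U(2)] by (simp add: field_simps power2_eq_square power3_eq_cube)
    ultimately show "((\<lambda>y. (f2 y * f y - f1 y * f1 y) / (f y * f y)) has_field_derivative
            (f3 z * f z ^ 2 - 3 * f z * f1 z * f2 z + 2 * f1 z ^ 3) / f z ^ 3) (at z)"
      by simp
  qed
  finally show ?thesis
    by (simp add: f1_def)
qed

lemma weierstrass_factor_2_scaled_has_field_derivative:
  assumes "a \<noteq> 0" and "y \<noteq> a"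
  shows "((\<lambda>u. weierstrass_factor 2 (u / a)) has_field_derivative
           (1 / (y - a) + 1 / a + y / a^2) * weierstrass_factor 2 (y / a)) (at y)"
proof -
  have factor: "weierstrass_factor 2 (u / a) = (1 - u / a) * exp (u / a + u^2 / (2 * a^2))" for u
    by (simp add: weierstrass_factor_def numeral_2_eq_2 power_divide mult_ac)
  have "y - a \<noteq> 0"
    using assms by simp
  thus ?thesis
    unfolding factor using assms
    by (auto intro!: derivative_eq_intros simp: field_simps power2_eq_square)
qed

lemma zeta_summand_has_field_derivative:
  fixes a y :: complex
  assumes "y \<noteq> a"
  shows "((\<lambda>u. 1 / (u - a) + 1 / a + u / a^2) has_field_derivative - 1 / (y - a)^2 + 1 / a^2) (at y)"
proof -
  have "((\<lambda>u. 1 / (u - a)) has_field_derivative - 1 / (y - a)^2) (at y)"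
    using assms by (auto intro!: derivative_eq_intros simp: power2_eq_square)
  from DERIV_add[OF DERIV_add[OF this DERIV_const] DERIV_cdivide[OF DERIV_ident, of "a^2"]]
  show ?thesis
    by simp
qed

lemma neg_wp_summand_has_field_derivative:
  fixes a y :: complex
  assumes "y \<noteq> a"
  shows "((\<lambda>u. - 1 / (u - a)^2 + 1 / a^2) has_field_derivative 2 / (y - a)^3) (at y)"
proof -
  have "((\<lambda>t. - 1 / t^2) has_field_derivative 2 / t^3) (at t)" if "t \<noteq> 0" for t :: complex
    using that by (auto intro!: derivative_eq_intros simp: field_simps power2_eq_square power3_eq_cube)
  from DERIV_chain2[OF this DERIV_diff[OF DERIV_ident DERIV_const]]
  have "((\<lambda>u. - 1 / (u - a)^2) has_field_derivative 2 / (y - a)^3) (at y)"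
    using assms by simp
  from DERIV_add[OF this DERIV_const]
  show ?thesis
    by simp
qed

lemma sum_int_interval_shift_diff:
  fixes h :: "int \<Rightarrow> 'a :: ab_group_add"
  assumes "a \<le> b"
  shows "(\<Sum>n\<in>{a..b}. h (n - 1)) - (\<Sum>n\<in>{a..b}. h n) = h (a - 1) - h b"
proof -
  have "(\<Sum>n\<in>{a..b}. h (n - 1)) = (\<Sum>n\<in>{a-1..b-1}. h n)"
    by (rule sum.reindex_bij_witness[of _ "\<lambda>n. n + 1" "\<lambda>n. n - 1"]) auto
  also have "{a-1..b-1} = insert (a - 1) {a..b-1}"
    using assms by auto
  finally have "(\<Sum>n\<in>{a..b}. h (n - 1)) = h (a - 1) + (\<Sum>n\<in>{a..b-1}. h n)"
    by simp
  moreover have "{a..b} = insert b {a..b-1}"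
    using assms by auto
  hence "(\<Sum>n\<in>{a..b}. h n) = h b + (\<Sum>n\<in>{a..b-1}. h n)"
    by simp
  ultimately show ?thesis
    by simp
qed

lemma holomorphic_shift_has_field_derivative:
  assumes "f holomorphic_on U" and "open U" and "z + c \<in> U"
  shows "((\<lambda>u. f (u + c)) has_field_derivative deriv f (z + c)) (at z)"
  using DERIV_chain2[OF holomorphic_derivI[OF assms] DERIV_add[OF DERIV_ident DERIV_const]] by simp

locale rectangular_lattice =
  fixes w :: real and w' :: complex
  assumes w_pos: "w > 0" and Re_w': "Re w' = 0" and Im_w'_pos: "Im w' > 0"
begin

abbreviation \<sigma> :: "complex \<Rightarrow> complex" where "\<sigma> \<equiv> wsigma (of_real w) w'"

abbreviation \<zeta> :: "complex \<Rightarrow> complex" where "\<zeta> \<equiv> wzeta (of_real w) w'"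

definition \<omega> :: "int \<times> int \<Rightarrow> complex" where
  "\<omega> i = 2 * of_int (fst i) * of_real w + 2 * of_int (snd i) * w'"

definition sup_norm :: "int \<times> int \<Rightarrow> int" where
  "sup_norm i = max \<bar>fst i\<bar> \<bar>snd i\<bar>"

definition min_half_period :: real where
  "min_half_period = min w (Im w')"

lemma min_half_period_pos: "min_half_period > 0"
  using w_pos Im_w'_pos by (simp add: min_half_period_def)

lemma cnj_w': "cnj w' = - w'"
  by (simp add: complex_eq_iff Re_w')

lemma Re_\<omega>: "Re (\<omega> i) = 2 * of_int (fst i) * w"
  by (simp add: \<omega>_def Re_w')

lemma Im_\<omega>: "Im (\<omega> i) = 2 * of_int (snd i) * Im w'"
  by (simp add: \<omega>_def)

lemma inj_\<omega>: "inj \<omega>"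
  using w_pos Im_w'_pos by (auto intro!: injI simp: complex_eq_iff Re_\<omega> Im_\<omega> prod_eq_iff)

lemma \<omega>_eq_0_iff [simp]: "\<omega> i = 0 \<longleftrightarrow> i = (0, 0)"
  using injD[OF inj_\<omega>, of i "(0, 0)"] by (auto simp: \<omega>_def)

lemma \<omega>_0 [simp]: "\<omega> (0, 0) = 0"
  by simp

lemma norm_\<omega>_ge: "norm (\<omega> i) \<ge> 2 * min_half_period * sup_norm i"
proof -
  have "min_half_period * \<bar>fst i\<bar> \<le> w * \<bar>fst i\<bar>"
    by (intro mult_right_mono) (auto simp: min_half_period_def)
  hence "2 * min_half_period * \<bar>fst i\<bar> \<le> \<bar>Re (\<omega> i)\<bar>"
    using w_pos by (simp add: Re_\<omega> abs_mult mult_ac)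
  moreover have "min_half_period * \<bar>snd i\<bar> \<le> Im w' * \<bar>snd i\<bar>"
    by (intro mult_right_mono) (auto simp: min_half_period_def)
  hence "2 * min_half_period * \<bar>snd i\<bar> \<le> \<bar>Im (\<omega> i)\<bar>"
    using Im_w'_pos by (simp add: Im_\<omega> abs_mult mult_ac)
  ultimately show ?thesis
    using abs_Re_le_cmod[of "\<omega> i"] abs_Im_le_cmod[of "\<omega> i"]
    by (simp add: sup_norm_def max_def)
qed

definition square :: "nat \<Rightarrow> (int \<times> int) set" where
  "square N = {- int N..int N} \<times> {- int N..int N}"

definition shell :: "nat \<Rightarrow> (int \<times> int) set" where
  "shell k = square (Suc k) - square k"

lemma finite_square [simp]: "finite (square N)" and finite_shell [simp]: "finite (shell k)"
  by (auto simp: square_def shell_def)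

lemma mem_square_iff: "i \<in> square N \<longleftrightarrow> sup_norm i \<le> int N"
  by (cases i) (auto simp: square_def sup_norm_def)

lemma square_mono: "M \<le> N \<Longrightarrow> square M \<subseteq> square N"
  by (auto simp: mem_square_iff)

lemma square_0: "square 0 = {(0, 0)}"
  by (auto simp: square_def)

lemma zero_mem_square [simp]: "(0, 0) \<in> square N"
  by (simp add: square_def)

lemma card_square: "card (square N) = (2 * N + 1)^2"
proof -
  have "card {- int N..int N} = 2 * N + 1"
    by simp
  thus ?thesis
    by (simp add: square_def card_cartesian_product power2_eq_square)
qed

lemma card_shell: "card (shell k) = 8 * (k + 1)"
proof -
  have "card (shell k) = (2 * Suc k + 1)^2 - (2 * k + 1)^2"
    using square_mono[of k "Suc k"] by (simp add: shell_def card_Diff_subset card_square)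
  thus ?thesis by (simp add: power2_eq_square algebra_simps)
qed

lemma zero_not_mem_shell [simp]: "(0, 0) \<notin> shell k"
  by (simp add: shell_def)

lemma sup_norm_shell: "i \<in> shell k \<Longrightarrow> sup_norm i = int k + 1"
  by (auto simp: shell_def mem_square_iff)

lemma prod_punctured_square_eq_prod_shells:
  "(\<Prod>i\<in>square N - {(0, 0)}. g i) = (\<Prod>k<N. \<Prod>i\<in>shell k. g i)"
proof (induction N)
  case 0
  show ?case by (simp add: square_0)
next
  case (Suc N)
  have "square (Suc N) - {(0, 0)} = (square N - {(0, 0)}) \<union> shell N"
    using square_mono[of N "Suc N"] by (auto simp: shell_def)
  moreover have "(square N - {(0, 0)}) \<inter> shell N = {}"
    by (auto simp: shell_def)
  ultimately show ?case
    by (simp add: prod.union_disjoint Suc.IH)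
qed

subsection \<open>Convergence of the product over square shells\<close>

definition sigma_partial :: "nat \<Rightarrow> complex \<Rightarrow> complex" where
  "sigma_partial N z = z * (\<Prod>i\<in>square N - {(0, 0)}. weierstrass_factor 2 (z / \<omega> i))"

definition shell_factor :: "nat \<Rightarrow> complex \<Rightarrow> complex" where
  "shell_factor k z = (\<Prod>i\<in>shell k. weierstrass_factor 2 (z / \<omega> i))"

lemma sigma_partial_eq_prod_shell_factors:
  "sigma_partial N z = z * (\<Prod>k<N. shell_factor k z)"
  by (simp add: sigma_partial_def shell_factor_def prod_punctured_square_eq_prod_shells)

lemma sigma_eq_lim: "\<sigma> z = lim (\<lambda>N. sigma_partial N z)"
proof -
  have "{2 * of_int m * of_real w + 2 * of_int n * w' | m n. \<bar>m\<bar> \<le> int N \<and> \<bar>n\<bar> \<le> int N}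
      = \<omega> ` square N" for N
    by (force simp: \<omega>_def square_def)
  hence lattice_square: "{2 * of_int m * of_real w + 2 * of_int n * w' | m n. \<bar>m\<bar> \<le> int N \<and> \<bar>n\<bar> \<le> int N} - {0}
      = \<omega> ` (square N - {(0, 0)})" for N
    by auto
  have factor: "(1 - z / \<omega> i) * exp (z / \<omega> i + z\<^sup>2 / (2 * (\<omega> i)\<^sup>2)) = weierstrass_factor 2 (z / \<omega> i)" for i
    by (simp add: weierstrass_factor_def numeral_2_eq_2 power_divide mult_ac)
  show ?thesis
    unfolding wsigma_def lattice_square sigma_partial_def
    by (simp add: prod.reindex inj_on_subset[OF inj_\<omega>] factor)
qed

lemma norm_weierstrass_factor_shell_minus_1_le:
  assumes "i \<in> shell k" and "norm z \<le> R" and "R \<le> min_half_period * (real k + 1)"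
  shows "norm (weierstrass_factor 2 (z / \<omega> i) - 1) \<le> 3 * (R / (2 * min_half_period * (real k + 1)))^3"
proof -
  define c where "c = min_half_period"
  have c: "c > 0"
    using min_half_period_pos by (simp add: c_def)
  have R: "R \<ge> 0"
    by (rule order.trans[OF norm_ge_zero assms(2)])
  have "2 * c * (real k + 1) \<le> norm (\<omega> i)"
    using norm_\<omega>_ge[of i] sup_norm_shell[OF assms(1)] by (simp add: c_def)
  hence small: "norm (z / \<omega> i) \<le> R / (2 * c * (real k + 1))"
    unfolding norm_divide by (rule frac_le[OF R assms(2), rotated]) (use c in simp)
  also have "\<dots> \<le> c * (real k + 1) / (2 * c * (real k + 1))"
    using assms(3) c by (intro divide_right_mono) (simp_all add: c_def)
  also have "\<dots> = 1 / 2"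
  proof -
    have "c * (real k + 1) \<noteq> 0"
      using c by simp
    thus ?thesis
      by (simp add: mult.assoc)
  qed
  finally have "norm (weierstrass_factor 2 (z / \<omega> i) - 1) \<le> 3 * norm (z / \<omega> i) ^ 3"
    using weierstrass_factor_bound[of "z / \<omega> i" 2] by (simp add: numeral_3_eq_3)
  also have "\<dots> \<le> 3 * (R / (2 * c * (real k + 1)))^3"
    using small by (intro mult_left_mono power_mono) simp_all
  finally show ?thesis
    by (simp add: c_def)
qed

lemma norm_shell_factor_minus_1_le:
  assumes "norm z \<le> R" and "R \<le> min_half_period * (real k + 1)"
  shows "norm (shell_factor k z - 1) \<le> exp (3 * R^3 / (min_half_period^3 * (real k + 1)^2)) - 1"
proof -
  define c where "c = min_half_period"
  have c: "c > 0"
    using min_half_period_pos by (simp add: c_def)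
  have "(\<Sum>i\<in>shell k. norm (weierstrass_factor 2 (z / \<omega> i) - 1))
           \<le> real (card (shell k)) * (3 * (R / (2 * c * (real k + 1)))^3)"
    using norm_weierstrass_factor_shell_minus_1_le[OF _ assms] by (intro sum_bounded_above) (simp add: c_def)
  also have "\<dots> = 3 * R^3 / (c^3 * (real k + 1)^2)"
  proof -
    have "8 * K * (3 * (R / (2 * c * K))^3) = 3 * R^3 / (c^3 * K^2)" if "K > 0" for K :: real
      using that c by (simp add: field_simps power3_eq_cube power2_eq_square)
    from this[of "real k + 1"] show ?thesis
      by (simp add: card_shell add.commute)
  qed
  finally have sum_le: "(\<Sum>i\<in>shell k. norm (weierstrass_factor 2 (z / \<omega> i) - 1))
                           \<le> 3 * R^3 / (c^3 * (real k + 1)^2)" .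
  have "norm (shell_factor k z - 1) \<le> exp (\<Sum>i\<in>shell k. norm (weierstrass_factor 2 (z / \<omega> i) - 1)) - 1"
    unfolding shell_factor_def by (rule norm_prod_minus_1_le_exp_sum) simp
  also have "\<dots> \<le> exp (3 * R^3 / (c^3 * (real k + 1)^2)) - 1"
    using sum_le by simp
  finally show ?thesis
    by (simp add: c_def)
qed

lemma eventually_norm_shell_factor_minus_1_le:
  assumes "R \<ge> 0"
  shows "\<forall>\<^sub>F k in sequentially. \<forall>z\<in>cball 0 R.
           norm (norm (shell_factor k z - 1)) \<le> exp (3 * R^3 / min_half_period^3 / (real k + 1)^2) - 1"
proof -
  obtain K :: nat where K: "R / min_half_period \<le> real K"
    using real_arch_simple by blast
  have "R \<le> min_half_period * (real k + 1)" if "k \<ge> K" for k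
  proof -
    have "R \<le> min_half_period * real K"
      using K min_half_period_pos by (simp add: field_simps)
    also have "\<dots> \<le> min_half_period * (real k + 1)"
      using that min_half_period_pos by (intro mult_left_mono) auto
    finally show ?thesis .
  qed
  hence "norm (norm (shell_factor k z - 1)) \<le> exp (3 * R^3 / min_half_period^3 / (real k + 1)^2) - 1"
    if "k \<ge> K" "z \<in> cball 0 R" for k z
    using norm_shell_factor_minus_1_le[of z R k] that by (simp add: divide_divide_eq_left)
  thus ?thesis
    unfolding eventually_sequentially by blast
qed

lemma convergent_prod_shell_factor: "convergent_prod (\<lambda>k. shell_factor k z)"
proof -
  have "\<forall>\<^sub>F k in sequentially.
          norm (norm (shell_factor k z - 1)) \<le> exp (3 * norm z^3 / min_half_period^3 / (real k + 1)^2) - 1"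
    using eventually_norm_shell_factor_minus_1_le[OF norm_ge_zero] by eventually_elim auto
  hence "summable (\<lambda>k. norm (shell_factor k z - 1))"
    by (rule summable_comparison_test_ev[OF _ summable_exp_inverse_square_minus_1])
       (use min_half_period_pos in auto)
  thus ?thesis
    by (intro abs_convergent_prod_imp_convergent_prod)
       (simp add: abs_convergent_prod_conv_summable)
qed

lemma shell_products_tendsto: "(\<lambda>N. \<Prod>k<N. shell_factor k z) \<longlonglongrightarrow> (\<Prod>k. shell_factor k z)"
proof (rule LIMSEQ_imp_Suc)
  show "(\<lambda>N. \<Prod>k<Suc N. shell_factor k z) \<longlonglongrightarrow> (\<Prod>k. shell_factor k z)"
    using convergent_prod_LIMSEQ[OF convergent_prod_shell_factor] by (simp add: lessThan_Suc_atMost)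
qed

lemma sigma_eq_prodinf: "\<sigma> z = z * (\<Prod>k. shell_factor k z)"
proof -
  have "(\<lambda>N. sigma_partial N z) \<longlonglongrightarrow> z * (\<Prod>k. shell_factor k z)"
    unfolding sigma_partial_eq_prod_shell_factors by (intro tendsto_mult_left shell_products_tendsto)
  thus ?thesis
    by (simp add: sigma_eq_lim limI)
qed

lemma sigma_partial_tendsto: "(\<lambda>N. sigma_partial N z) \<longlonglongrightarrow> \<sigma> z"
  unfolding sigma_partial_eq_prod_shell_factors sigma_eq_prodinf
  by (intro tendsto_mult_left shell_products_tendsto)

lemma sigma_nonzero:
  assumes "z \<notin> range \<omega>"
  shows "\<sigma> z \<noteq> 0"
proof -
  have "z \<noteq> 0"
    using assms by (metis \<omega>_eq_0_iff rangeI)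
  moreover have "shell_factor k z \<noteq> 0" for k
    using assms by (auto simp: shell_factor_def)
  ultimately show ?thesis
    using has_prod_eq_0_iff[OF convergent_prod_has_prod[OF convergent_prod_shell_factor]]
    by (auto simp: sigma_eq_prodinf)
qed

lemma uniform_limit_sigma_partial:
  assumes "R > 0"
  shows "uniform_limit (cball 0 R) sigma_partial \<sigma> sequentially"
proof -
  define prods where "prods = (\<lambda>N z. \<Prod>k<N. shell_factor k z)"
  have cont: "continuous_on (cball 0 R) (prods N)" for N
    unfolding prods_def shell_factor_def by (intro continuous_intros) auto
  have "uniformly_convergent_on (cball 0 R) prods"
    unfolding prods_def
  proof (rule uniformly_convergent_on_prod')
    show "uniformly_convergent_on (cball 0 R) (\<lambda>N z. \<Sum>k<N. norm (shell_factor k z - 1))"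
      using assms min_half_period_pos
      by (intro Weierstrass_m_test'_ev[OF eventually_norm_shell_factor_minus_1_le
                                         summable_exp_inverse_square_minus_1]) auto
  qed (auto simp: shell_factor_def intro!: continuous_intros)
  then obtain G where G: "uniform_limit (cball 0 R) prods G sequentially"
    by (auto simp: uniformly_convergent_on_def)
  have G_eq: "G z = (\<Prod>k. shell_factor k z)" if "z \<in> cball 0 R" for z
    using tendsto_uniform_limitI[OF G that] shell_products_tendsto[of z]
    unfolding prods_def by (rule LIMSEQ_unique)
  have "uniform_limit (cball 0 R) prods G sequentially
          \<longleftrightarrow> uniform_limit (cball 0 R) prods (\<lambda>z. \<Prod>k. shell_factor k z) sequentially"
    by (intro uniform_limit_cong) (auto simp: G_eq)
  with G have G': "uniform_limit (cball 0 R) prods (\<lambda>z. \<Prod>k. shell_factor k z) sequentially"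
    by blast
  have "continuous_on (cball 0 R) (\<lambda>z. \<Prod>k. shell_factor k z)"
    by (rule uniform_limit_theorem[OF always_eventually G']) (auto intro: cont)
  hence "bounded ((\<lambda>z. \<Prod>k. shell_factor k z) ` cball 0 R)"
    by (intro compact_imp_bounded compact_continuous_image) auto
  hence "uniform_limit (cball 0 R) (\<lambda>N z. z * prods N z) (\<lambda>z. z * (\<Prod>k. shell_factor k z)) sequentially"
    by (intro uniform_lim_mult[OF uniform_limit_const G']) auto
  thus ?thesis
    by (simp add: prods_def sigma_partial_eq_prod_shell_factors[abs_def] sigma_eq_prodinf[abs_def])
qed

lemma sigma_partial_holomorphic [holomorphic_intros]: "sigma_partial N holomorphic_on A"
  unfolding sigma_partial_def[abs_def] by (intro holomorphic_intros) auto

lemma sigma_holomorphic [holomorphic_intros]: "\<sigma> holomorphic_on A"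
proof (rule holomorphic_on_subset[of _ UNIV])
  show "\<sigma> holomorphic_on UNIV"
  proof (rule holomorphic_uniform_sequence[where f = sigma_partial])
    fix z :: complex
    have "uniform_limit (cball z 1) sigma_partial \<sigma> sequentially"
      by (rule uniform_limit_on_subset[OF uniform_limit_sigma_partial[of "norm z + 1"]])
         (auto simp: cball_subset_cball_iff add_nonneg_pos)
    thus "\<exists>d>0. cball z d \<subseteq> UNIV \<and> uniform_limit (cball z d) sigma_partial \<sigma> sequentially"
      by (intro exI[of _ 1]) auto
  qed (auto intro: holomorphic_intros)
qed auto

lemma sigma_field_differentiable: "\<sigma> field_differentiable at z"
  using sigma_holomorphic[of UNIV] holomorphic_on_imp_differentiable_at by blast

subsection \<open>Odd and conjugation symmetry\<close>

lemma \<omega>_uminus: "\<omega> (- i) = - \<omega> i"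
  by (simp add: \<omega>_def algebra_simps)

lemma \<omega>_conj_index: "\<omega> (fst i, - snd i) = cnj (\<omega> i)"
  by (simp add: \<omega>_def cnj_w')

lemma sigma_partial_minus: "sigma_partial N (- z) = - sigma_partial N z"
proof -
  have "(\<Prod>i\<in>square N - {(0, 0)}. weierstrass_factor 2 (- z / \<omega> i))
      = (\<Prod>i\<in>square N - {(0, 0)}. weierstrass_factor 2 (z / \<omega> i))"
    by (rule prod.reindex_bij_witness[of _ uminus uminus])
       (auto simp: \<omega>_uminus mem_square_iff sup_norm_def)
  thus ?thesis
    by (simp add: sigma_partial_def)
qed

lemma sigma_partial_cnj: "sigma_partial N (cnj z) = cnj (sigma_partial N z)"
proof -
  have "(\<Prod>i\<in>square N - {(0, 0)}. weierstrass_factor 2 (cnj z / \<omega> i))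
      = (\<Prod>i\<in>square N - {(0, 0)}. weierstrass_factor 2 (cnj (z / \<omega> i)))"
    by (rule prod.reindex_bij_witness[of _ "\<lambda>i. (fst i, - snd i)" "\<lambda>i. (fst i, - snd i)"])
       (auto simp: \<omega>_conj_index mem_square_iff sup_norm_def)
  thus ?thesis
    by (simp add: sigma_partial_def weierstrass_factor_def exp_cnj)
qed

lemma sigma_minus: "\<sigma> (- z) = - \<sigma> z"
  using sigma_partial_tendsto[of "- z"] tendsto_minus[OF sigma_partial_tendsto[of z]]
  by (simp add: sigma_partial_minus LIMSEQ_unique)

lemma sigma_cnj: "\<sigma> (cnj z) = cnj (\<sigma> z)"
  using sigma_partial_tendsto[of "cnj z"] tendsto_cnj[OF sigma_partial_tendsto[of z]]
  by (simp add: sigma_partial_cnj LIMSEQ_unique)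

lemma zeta_eq: "\<zeta> z = deriv \<sigma> z / \<sigma> z"
  by (simp add: wzeta_def)

lemma zeta_minus: "\<zeta> (- z) = - \<zeta> z"
  by (simp add: zeta_eq sigma_minus deriv_odd_function[OF sigma_minus sigma_field_differentiable])

lemma zeta_cnj: "\<zeta> (cnj z) = cnj (\<zeta> z)"
  by (simp add: zeta_eq sigma_cnj deriv_cnj_symmetric[OF sigma_cnj sigma_field_differentiable])

subsection \<open>Periodicity of the second derivative of zeta\<close>

text \<open>The summand for \<open>i = (0, 0)\<close> is \<open>1 / z\<close>, because \<open>1 / 0 = 0\<close>.\<close>

definition zeta_partial :: "nat \<Rightarrow> complex \<Rightarrow> complex" where
  "zeta_partial N z = (\<Sum>i\<in>square N. 1 / (z - \<omega> i) + 1 / \<omega> i + z / (\<omega> i)^2)"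

definition inverse_cube_sum :: "nat \<Rightarrow> complex \<Rightarrow> complex" where
  "inverse_cube_sum N z = (\<Sum>i\<in>square N. 1 / (z - \<omega> i)^3)"

lemma sigma_partial_has_field_derivative:
  assumes "z \<notin> \<omega> ` square N"
  shows "(sigma_partial N has_field_derivative sigma_partial N z * zeta_partial N z) (at z)"
proof -
  define L where "L = square N - {(0, 0)}"
  define P where "P = (\<lambda>u. \<Prod>i\<in>L. weierstrass_factor 2 (u / \<omega> i))"
  define S where "S = (\<Sum>i\<in>L. 1 / (z - \<omega> i) + 1 / \<omega> i + z / (\<omega> i)^2)"
  have z: "z \<noteq> 0" "\<And>i. i \<in> L \<Longrightarrow> z \<noteq> \<omega> i"
    using assms zero_mem_square by (force simp: L_def)+
  have nz: "weierstrass_factor 2 (z / \<omega> i) \<noteq> 0" if "i \<in> L" for i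
    using z(2)[OF that] that by (auto simp: L_def)
  have "(P has_field_derivative P z *
          (\<Sum>i\<in>L. (1 / (z - \<omega> i) + 1 / \<omega> i + z / (\<omega> i)^2) * weierstrass_factor 2 (z / \<omega> i)
                     / weierstrass_factor 2 (z / \<omega> i))) (at z)"
    unfolding P_def
    by (rule has_field_derivative_prod'[OF nz weierstrass_factor_2_scaled_has_field_derivative])
       (use z(2) in \<open>auto simp: L_def\<close>)
  moreover have "(\<Sum>i\<in>L. (1 / (z - \<omega> i) + 1 / \<omega> i + z / (\<omega> i)^2) * weierstrass_factor 2 (z / \<omega> i)
                     / weierstrass_factor 2 (z / \<omega> i)) = S"
    unfolding S_def using nz by (intro sum.cong) auto
  ultimately have "(P has_field_derivative P z * S) (at z)"
    by simp
  hence "((\<lambda>u. u * P u) has_field_derivative P z * (1 + z * S)) (at z)"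
    by (auto intro!: derivative_eq_intros simp: algebra_simps)
  moreover have sigma_partial_eq: "sigma_partial N = (\<lambda>u. u * P u)"
    by (simp add: fun_eq_iff sigma_partial_def P_def L_def)
  ultimately have deriv: "(sigma_partial N has_field_derivative P z * (1 + z * S)) (at z)"
    by simp
  have zeta_partial_eq: "zeta_partial N z = 1 / z + S"
    by (simp add: zeta_partial_def S_def L_def sum.remove[of _ "(0, 0)"])
  have "P z * (1 + z * S) = sigma_partial N z * zeta_partial N z"
    using z(1) unfolding sigma_partial_eq zeta_partial_eq by (simp add: field_simps)
  with deriv show ?thesis
    by simp
qed

lemma open_lattice_complement: "open (- (\<omega> ` square N))"
  by (intro open_Compl finite_imp_closed) auto

lemma deriv2_zeta_partial:
  assumes "z \<notin> \<omega> ` square N"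
  shows "deriv (deriv (zeta_partial N)) z = 2 * inverse_cube_sum N z"
proof -
  have zeta_partial': "((zeta_partial N) has_field_derivative
                         (\<Sum>i\<in>square N. - 1 / (y - \<omega> i)^2 + 1 / (\<omega> i)^2)) (at y)"
    if "y \<notin> \<omega> ` square N" for y
    unfolding zeta_partial_def[abs_def] using that
    by (intro DERIV_sum zeta_summand_has_field_derivative) auto
  have "eventually (\<lambda>y. deriv (zeta_partial N) y = (\<Sum>i\<in>square N. - 1 / (y - \<omega> i)^2 + 1 / (\<omega> i)^2)) (nhds z)"
    using assms by (intro eventually_mono[OF eventually_nhds_in_open[OF open_lattice_complement]]
                           DERIV_imp_deriv zeta_partial') auto
  hence "deriv (deriv (zeta_partial N)) z = deriv (\<lambda>y. \<Sum>i\<in>square N. - 1 / (y - \<omega> i)^2 + 1 / (\<omega> i)^2) z"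
    by (rule deriv_cong_ev) simp
  also have "\<dots> = (\<Sum>i\<in>square N. 2 / (z - \<omega> i)^3)"
    using assms by (intro DERIV_imp_deriv DERIV_sum neg_wp_summand_has_field_derivative) auto
  also have "\<dots> = 2 * inverse_cube_sum N z"
    by (simp add: inverse_cube_sum_def sum_distrib_left)
  finally show ?thesis .
qed

lemma deriv2_logderiv_sigma_partial:
  assumes "z \<notin> \<omega> ` square N"
  shows "deriv (deriv (\<lambda>y. deriv (sigma_partial N) y / sigma_partial N y)) z = 2 * inverse_cube_sum N z"
proof -
  have "eventually (\<lambda>y. y \<in> - (\<omega> ` square N)) (nhds z)"
    using assms by (intro eventually_nhds_in_open open_lattice_complement) auto
  hence "eventually (\<lambda>y. deriv (sigma_partial N) y / sigma_partial N y = zeta_partial N y) (nhds z)"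
  proof eventually_elim
    case (elim y)
    have "sigma_partial N y \<noteq> 0"
      using elim by (auto simp: sigma_partial_def)
    thus ?case
      using DERIV_imp_deriv[OF sigma_partial_has_field_derivative] elim by auto
  qed
  hence "deriv (deriv (\<lambda>y. deriv (sigma_partial N) y / sigma_partial N y)) z
           = deriv (deriv (zeta_partial N)) z"
    using higher_deriv_cong_ev[of _ _ z z 2] by (simp add: numeral_2_eq_2)
  also have "\<dots> = 2 * inverse_cube_sum N z"
    by (rule deriv2_zeta_partial[OF assms])
  finally show ?thesis .
qed

lemma open_sigma_nonzero: "open {y. \<sigma> y \<noteq> 0}"
  by (intro open_Collect_neq holomorphic_on_imp_continuous_on sigma_holomorphic continuous_on_const)

lemma zeta_holomorphic: "\<zeta> holomorphic_on {y. \<sigma> y \<noteq> 0}"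
proof -
  have "deriv \<sigma> holomorphic_on UNIV"
    by (intro holomorphic_deriv sigma_holomorphic) auto
  thus ?thesis
    unfolding zeta_eq by (intro holomorphic_intros holomorphic_on_subset[of "deriv \<sigma>" UNIV]) auto
qed

lemma higher_deriv_sigma_partial_tendsto:
  "(\<lambda>N. (deriv ^^ m) (sigma_partial N) z) \<longlonglongrightarrow> (deriv ^^ m) \<sigma> z"
proof (rule higher_deriv_complex_uniform_limit)
  show "uniform_limit (ball 0 (norm z + 1)) sigma_partial \<sigma> sequentially"
    by (rule uniform_limit_on_subset[OF uniform_limit_sigma_partial[of "norm z + 1"]])
       (auto simp: add_nonneg_pos)
qed (auto intro: always_eventually holomorphic_intros)

lemma inverse_cube_sum_tendsto_deriv2_zeta:
  assumes "z \<notin> range \<omega>"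
  shows "(\<lambda>N. 2 * inverse_cube_sum N z) \<longlonglongrightarrow> deriv (deriv \<zeta>) z"
proof -
  define F :: "(complex \<Rightarrow> complex) \<Rightarrow> complex" where
    "F f = (deriv (deriv (deriv f)) z * f z ^ 2 - 3 * f z * deriv f z * deriv (deriv f) z
              + 2 * deriv f z ^ 3) / f z ^ 3" for f
  have nonzero: "\<sigma> z \<noteq> 0"
    by (rule sigma_nonzero[OF assms])
  have "(\<lambda>N. F (sigma_partial N)) \<longlonglongrightarrow> F \<sigma>"
    using higher_deriv_sigma_partial_tendsto[of 1 z] higher_deriv_sigma_partial_tendsto[of 2 z]
          higher_deriv_sigma_partial_tendsto[of 3 z] nonzero
    unfolding F_def
    by (intro tendsto_intros sigma_partial_tendsto) (simp_all add: numeral_2_eq_2 numeral_3_eq_3)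
  moreover have "F (sigma_partial N) = 2 * inverse_cube_sum N z" for N
  proof -
    have z: "z \<in> - (\<omega> ` square N)"
      using assms by auto
    have "sigma_partial N y \<noteq> 0" if "y \<in> - (\<omega> ` square N)" for y
      using that by (auto simp: sigma_partial_def)
    with z show ?thesis
      using deriv2_logderiv[OF sigma_partial_holomorphic open_lattice_complement z]
            deriv2_logderiv_sigma_partial[of z N] unfolding F_def by auto
  qed
  moreover have "F \<sigma> = deriv (deriv \<zeta>) z"
  proof -
    have "\<zeta> = (\<lambda>y. deriv \<sigma> y / \<sigma> y)"
      by (simp add: fun_eq_iff zeta_eq)
    moreover have "deriv (deriv (\<lambda>y. deriv \<sigma> y / \<sigma> y)) z = F \<sigma>"
      unfolding F_def by (rule deriv2_logderiv[OF sigma_holomorphic open_sigma_nonzero]) (use nonzero in auto)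
    ultimately show ?thesis
      by simp
  qed
  ultimately show ?thesis
    by simp
qed

lemma \<omega>_shift: "z + 2 * w' - \<omega> (m, n) = z - \<omega> (m, n - 1)"
  by (simp add: \<omega>_def algebra_simps)

lemma inverse_cube_sum_shift:
  "inverse_cube_sum N (z + 2 * w') - inverse_cube_sum N z
     = (\<Sum>m\<in>{- int N..int N}. 1 / (z - \<omega> (m, - int N - 1))^3 - 1 / (z - \<omega> (m, int N))^3)"
proof -
  have "inverse_cube_sum N y = (\<Sum>m\<in>{- int N..int N}. \<Sum>n\<in>{- int N..int N}. 1 / (y - \<omega> (m, n))^3)" for y
    by (simp add: inverse_cube_sum_def square_def sum.cartesian_product)
  hence "inverse_cube_sum N (z + 2 * w') - inverse_cube_sum N z
     = (\<Sum>m\<in>{- int N..int N}. (\<Sum>n\<in>{- int N..int N}. 1 / (z - \<omega> (m, n - 1))^3)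
                                - (\<Sum>n\<in>{- int N..int N}. 1 / (z - \<omega> (m, n))^3))"
    by (simp add: \<omega>_shift sum_subtractf)
  also have "\<dots> = (\<Sum>m\<in>{- int N..int N}. 1 / (z - \<omega> (m, - int N - 1))^3 - 1 / (z - \<omega> (m, int N))^3)"
    by (intro sum.cong refl sum_int_interval_shift_diff[where h = "\<lambda>n. 1 / (z - \<omega> (_, n))^3"]) simp
  finally show ?thesis .
qed

lemma norm_inverse_cube_le:
  assumes "N \<ge> 1" and "norm z \<le> min_half_period * N" and "int N \<le> \<bar>n\<bar>"
  shows "norm (1 / (z - \<omega> (m, n))^3) \<le> 1 / (min_half_period * N)^3"
proof -
  have pos: "min_half_period * N > 0"
    using assms(1) min_half_period_pos by simp
  have "2 * min_half_period * N \<le> 2 * min_half_period * sup_norm (m, n)"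
    using assms(3) min_half_period_pos by (intro mult_left_mono) (auto simp: sup_norm_def)
  also have "\<dots> \<le> norm (\<omega> (m, n))"
    by (rule norm_\<omega>_ge)
  finally have "min_half_period * N \<le> norm (z - \<omega> (m, n))"
    using assms(2) norm_triangle_ineq2[of "\<omega> (m, n)" z] by (simp add: norm_minus_commute)
  hence "1 / norm (z - \<omega> (m, n))^3 \<le> 1 / (min_half_period * N)^3"
    using pos by (intro divide_left_mono power_mono mult_pos_pos) auto
  thus ?thesis
    by (simp add: norm_divide norm_power)
qed

lemma norm_inverse_cube_sum_shift_le:
  assumes N: "N \<ge> 1" "norm z \<le> min_half_period * N"
  shows "norm (inverse_cube_sum N (z + 2 * w') - inverse_cube_sum N z) \<le> 6 / min_half_period^3 / real N"
proof -
  define c where "c = min_half_period"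
  have c: "c > 0"
    using min_half_period_pos by (simp add: c_def)
  have bound: "norm (1 / (z - \<omega> (m, n))^3) \<le> 1 / (c * N)^3" if "int N \<le> \<bar>n\<bar>" for m n
    using norm_inverse_cube_le[OF N that] by (simp add: c_def)
  have "norm (inverse_cube_sum N (z + 2 * w') - inverse_cube_sum N z)
          \<le> (\<Sum>m\<in>{- int N..int N}. 2 / (c * N)^3)"
    unfolding inverse_cube_sum_shift
    by (intro order.trans[OF norm_sum] sum_mono order.trans[OF norm_triangle_ineq4])
       (auto intro!: order.trans[OF add_mono[OF bound bound]])
  also have "\<dots> = (2 * N + 1) * (2 / (c * N)^3)"
    by simp
  also have "\<dots> \<le> 3 * N * (2 / (c * N)^3)"
    using N c by (intro mult_right_mono) auto
  also have "\<dots> = 6 / c^3 / (real N * real N)"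
    using N c by (simp add: field_simps power3_eq_cube)
  also have "\<dots> \<le> 6 / c^3 / real N"
    using N c by (intro divide_left_mono) auto
  finally show ?thesis
    by (simp add: c_def)
qed

lemma inverse_cube_sum_shift_tendsto_0:
  "(\<lambda>N. inverse_cube_sum N (z + 2 * w') - inverse_cube_sum N z) \<longlonglongrightarrow> 0"
proof (rule Lim_null_comparison)
  define c where "c = min_half_period"
  have c: "c > 0"
    using min_half_period_pos by (simp add: c_def)
  obtain N0 :: nat where N0: "norm z / c + 1 \<le> real N0"
    using real_arch_simple by blast
  show "\<forall>\<^sub>F N in sequentially. norm (inverse_cube_sum N (z + 2 * w') - inverse_cube_sum N z) \<le> 6 / c^3 / real N"
    using eventually_ge_at_top[of N0]
  proof eventually_elim
    case (elim N)
    have N_ge: "norm z / c + 1 \<le> real N"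
      using N0 elim by (meson of_nat_le_iff order_trans)
    have "0 \<le> norm z / c"
      using c by simp
    with N_ge have "N \<ge> 1"
      by simp
    moreover have "norm z \<le> c * N"
      using N_ge c by (simp add: field_simps)
    ultimately show ?case
      unfolding c_def by (rule norm_inverse_cube_sum_shift_le)
  qed
  show "(\<lambda>N. 6 / c^3 / real N) \<longlonglongrightarrow> 0"
    by (rule lim_const_over_n)
qed

lemma deriv2_zeta_periodic:
  assumes "z \<notin> range \<omega>" and "z + 2 * w' \<notin> range \<omega>"
  shows "deriv (deriv \<zeta>) (z + 2 * w') = deriv (deriv \<zeta>) z"
proof -
  have "(\<lambda>N. 2 * (inverse_cube_sum N (z + 2 * w') - inverse_cube_sum N z))
          \<longlonglongrightarrow> deriv (deriv \<zeta>) (z + 2 * w') - deriv (deriv \<zeta>) z"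
    unfolding right_diff_distrib by (intro tendsto_diff inverse_cube_sum_tendsto_deriv2_zeta assms)
  moreover have "(\<lambda>N. 2 * (inverse_cube_sum N (z + 2 * w') - inverse_cube_sum N z)) \<longlonglongrightarrow> 0"
    using tendsto_mult_left[OF inverse_cube_sum_shift_tendsto_0, of 2] by simp
  ultimately show ?thesis
    using LIMSEQ_unique by fastforce
qed

subsection \<open>Quasi-periodicity of sigma\<close>

definition strip :: "complex set" where
  "strip = {z. - 2 * Im w' < Im z \<and> Im z < 0}"

lemma convex_strip: "convex strip"
  unfolding strip_def Collect_conj_eq
  by (intro convex_Int convex_halfspace_Im_gt convex_halfspace_Im_lt)

lemma minus_w'_mem_strip: "- w' \<in> strip"
  using Im_w'_pos by (simp add: strip_def)

lemma not_in_range_\<omega>_if_Im_between: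
  assumes "2 * of_int k * Im w' < Im z" and "Im z < 2 * of_int (k + 1) * Im w'"
  shows "z \<notin> range \<omega>"
proof
  assume "z \<in> range \<omega>"
  then obtain i where "z = \<omega> i"
    by auto
  with assms have "of_int k < real_of_int (snd i)" "real_of_int (snd i) < of_int (k + 1)"
    using Im_w'_pos by (simp_all add: Im_\<omega>)
  hence "k < snd i" "snd i < k + 1"
    by simp_all
  thus False
    by linarith
qed

lemma strip_not_in_range_\<omega>:
  assumes "z \<in> strip"
  shows "z \<notin> range \<omega>" and "z + 2 * w' \<notin> range \<omega>"
  by (rule not_in_range_\<omega>_if_Im_between[of "- 1"] not_in_range_\<omega>_if_Im_between[of 0];
      use assms in \<open>simp add: strip_def\<close>)+

lemma strip_sigma_nonzero:
  assumes "z \<in> strip"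
  shows "\<sigma> z \<noteq> 0" and "\<sigma> (z + 2 * w') \<noteq> 0"
  using sigma_nonzero strip_not_in_range_\<omega>[OF assms] by auto

lemma eq_on_strip_if_deriv_0:
  assumes "\<And>z. z \<in> strip \<Longrightarrow> (f has_field_derivative 0) (at z)" and "z \<in> strip"
  shows "f z = f (- w')"
proof -
  obtain c where "\<forall>x\<in>strip. f x = c"
    using has_field_derivative_zero_constant[OF convex_strip] assms(1) has_field_derivative_at_within
    by blast
  thus ?thesis
    using assms(2) minus_w'_mem_strip by auto
qed

lemma deriv_zeta_periodic:
  assumes "z \<in> strip"
  shows "deriv \<zeta> (z + 2 * w') = deriv \<zeta> z"
proof -
  have deriv_zeta_holomorphic: "deriv \<zeta> holomorphic_on {y. \<sigma> y \<noteq> 0}"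
    by (intro holomorphic_deriv zeta_holomorphic open_sigma_nonzero)
  have "((\<lambda>u. deriv \<zeta> (u + 2 * w') - deriv \<zeta> u) has_field_derivative 0) (at y)" if "y \<in> strip" for y
  proof -
    have "((\<lambda>u. deriv \<zeta> (u + 2 * w') - deriv \<zeta> u) has_field_derivative
            deriv (deriv \<zeta>) (y + 2 * w') - deriv (deriv \<zeta>) y) (at y)"
      using strip_sigma_nonzero[OF that]
      by (intro DERIV_diff holomorphic_shift_has_field_derivative[OF deriv_zeta_holomorphic open_sigma_nonzero]
                holomorphic_derivI[OF deriv_zeta_holomorphic open_sigma_nonzero]) auto
    thus ?thesis
      by (simp add: deriv2_zeta_periodic[OF strip_not_in_range_\<omega>[OF that]])
  qed
  from eq_on_strip_if_deriv_0[OF this assms]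
  have "deriv \<zeta> (z + 2 * w') - deriv \<zeta> z = deriv \<zeta> w' - deriv \<zeta> (- w')"
    by simp
  also have "deriv \<zeta> (- w') = deriv \<zeta> w'"
    using zeta_minus strip_sigma_nonzero(2)[OF minus_w'_mem_strip]
    by (intro deriv_odd_function holomorphic_on_imp_differentiable_at[OF zeta_holomorphic open_sigma_nonzero])
       auto
  finally show ?thesis
    by simp
qed

lemma zeta_quasi_periodic:
  assumes "z \<in> strip"
  shows "\<zeta> (z + 2 * w') = \<zeta> z + 2 * \<zeta> w'"
proof -
  have "((\<lambda>u. \<zeta> (u + 2 * w') - \<zeta> u) has_field_derivative 0) (at y)" if "y \<in> strip" for y
  proof -
    have "((\<lambda>u. \<zeta> (u + 2 * w') - \<zeta> u) has_field_derivative deriv \<zeta> (y + 2 * w') - deriv \<zeta> y) (at y)"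
      using strip_sigma_nonzero[OF that]
      by (intro DERIV_diff holomorphic_shift_has_field_derivative[OF zeta_holomorphic open_sigma_nonzero]
                holomorphic_derivI[OF zeta_holomorphic open_sigma_nonzero]) auto
    thus ?thesis
      by (simp add: deriv_zeta_periodic[OF that])
  qed
  from eq_on_strip_if_deriv_0[OF this assms]
  have "\<zeta> (z + 2 * w') - \<zeta> z = 2 * \<zeta> w'"
    by (simp add: zeta_minus)
  thus ?thesis
    by (metis add.commute diff_eq_eq)
qed

lemma deriv_sigma_shift_eq:
  assumes "z \<in> strip"
  shows "deriv \<sigma> (z + 2 * w') * \<sigma> z = (deriv \<sigma> z + 2 * \<zeta> w' * \<sigma> z) * \<sigma> (z + 2 * w')"
  using zeta_quasi_periodic[OF assms] strip_sigma_nonzero[OF assms] by (simp add: zeta_eq field_simps)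

lemma sigma_quasi_periodic:
  assumes "z \<in> strip"
  shows "\<sigma> (z + 2 * w') = - exp (2 * \<zeta> w' * (z + w')) * \<sigma> z"
proof -
  define \<eta> where "\<eta> = \<zeta> w'"
  define h where "h u = \<sigma> (u + 2 * w') * exp (- 2 * \<eta> * u) / \<sigma> u" for u
  have "(h has_field_derivative 0) (at y)" if "y \<in> strip" for y
  proof -
    have sigma_shift: "((\<lambda>u. \<sigma> (u + 2 * w')) has_field_derivative deriv \<sigma> (y + 2 * w')) (at y)"
      by (rule holomorphic_shift_has_field_derivative[OF sigma_holomorphic open_UNIV]) simp
    have "(h has_field_derivative
            ((deriv \<sigma> (y + 2 * w') * exp (- 2 * \<eta> * y) + exp (- 2 * \<eta> * y) * (- 2 * \<eta>) * \<sigma> (y + 2 * w')) * \<sigma> y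
              - \<sigma> (y + 2 * w') * exp (- 2 * \<eta> * y) * deriv \<sigma> y) / (\<sigma> y * \<sigma> y)) (at y)"
      (is "(h has_field_derivative ?numerator / _) _")
      unfolding h_def[abs_def]
      by (intro DERIV_divide DERIV_mult strip_sigma_nonzero[OF that] sigma_shift
                holomorphic_derivI[OF sigma_holomorphic open_UNIV])
         (auto intro!: derivative_eq_intros)
    moreover have "?numerator = exp (- 2 * \<eta> * y) *
        (deriv \<sigma> (y + 2 * w') * \<sigma> y - (deriv \<sigma> y + 2 * \<eta> * \<sigma> y) * \<sigma> (y + 2 * w'))"
      by (simp add: algebra_simps)
    ultimately show ?thesis
      using deriv_sigma_shift_eq[OF that] by (simp add: \<eta>_def)
  qed
  from eq_on_strip_if_deriv_0[OF this assms]
  have "h z = - exp (2 * \<eta> * w')"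
    using strip_sigma_nonzero(1)[OF minus_w'_mem_strip] by (simp add: h_def sigma_minus exp_minus)
  thus ?thesis
    using strip_sigma_nonzero(1)[OF assms]
    by (simp add: h_def \<eta>_def field_simps exp_minus exp_add[symmetric] algebra_simps)
qed

lemma sigma_of_real_real: "\<sigma> (of_real x) \<in> \<real>"
  by (simp add: Reals_cnj_iff sigma_cnj[symmetric])

lemma zeta_of_real_real: "\<zeta> (of_real x) \<in> \<real>"
  by (simp add: Reals_cnj_iff zeta_cnj[symmetric])

lemma sigma_shift_ratio_real:
  fixes x s :: real
  shows "\<sigma> (of_real x + of_real s + w') / \<sigma> (of_real x + w') * exp (- \<zeta> w' * of_real s) \<in> \<real>"
proof -
  define \<eta> where "\<eta> = \<zeta> w'"
  define A where "A = \<sigma> (of_real x + of_real s - w')"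
  define B where "B = \<sigma> (of_real x - w')"
  have strip: "of_real t - w' \<in> strip" for t
    using Im_w'_pos by (simp add: strip_def)
  have A: "\<sigma> (of_real x + of_real s + w') = - exp (2 * \<eta> * (of_real x + of_real s)) * A"
    using sigma_quasi_periodic[OF strip[of "x + s"]] by (simp add: A_def \<eta>_def algebra_simps)
  have B: "\<sigma> (of_real x + w') = - exp (2 * \<eta> * of_real x) * B"
    using sigma_quasi_periodic[OF strip[of x]] by (simp add: B_def \<eta>_def algebra_simps)
  have "B \<noteq> 0"
    using strip_sigma_nonzero(1)[OF strip[of x]] by (simp add: B_def)
  hence "\<sigma> (of_real x + of_real s + w') / \<sigma> (of_real x + w') * exp (- \<eta> * of_real s)
           = A / B * exp (\<eta> * of_real s)"
    unfolding A B by (simp add: field_simps exp_add[symmetric] exp_minus)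
  moreover have "cnj \<eta> = - \<eta>"
    by (simp add: \<eta>_def zeta_cnj[symmetric] cnj_w' zeta_minus)
  hence "cnj (A / B * exp (\<eta> * of_real s))
           = \<sigma> (of_real x + of_real s + w') / \<sigma> (of_real x + w') * exp (- \<eta> * of_real s)"
    by (simp add: A_def B_def sigma_cnj[symmetric] cnj_w' exp_cnj)
  ultimately show ?thesis
    by (simp add: Reals_cnj_iff \<eta>_def)
qed

lemma shifted_sigma_quotient_real:
  fixes x s :: real
  assumes "q \<in> \<real>" and "t \<in> \<real>"
  shows "\<sigma> (of_real x + of_real s + w') / (\<sigma> (of_real x + w') * q)
           * exp (- t * of_real x - \<zeta> w' * of_real s) \<in> \<real>"
proof -
  have exp_real: "exp (- t * of_real x) \<in> \<real>"
    using assms(2) by (simp add: exp_Reals_eq)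
  have "\<sigma> (of_real x + of_real s + w') / (\<sigma> (of_real x + w') * q) * exp (- t * of_real x - \<zeta> w' * of_real s)
          = \<sigma> (of_real x + of_real s + w') / \<sigma> (of_real x + w') * exp (- \<zeta> w' * of_real s) / q
              * exp (- t * of_real x)"
    by (simp add: exp_diff exp_minus divide_inverse mult_ac)
  also have "\<dots> \<in> \<real>"
    by (intro Reals_mult Reals_divide sigma_shift_ratio_real assms(1) exp_real)
  finally show ?thesis .
qed

end

theorem proposition2p1:
  fixes g2 g3 w :: real and w' :: complex
  assumes disc: "g2 ^ 3 - 27 * g3 ^ 2 > 0"
    and w_pos: "w > 0"
    and w'_imag: "Re w' = 0" and w'_pos: "Im w' > 0"
    and invariants: "\<forall>z. z \<notin> lattice (of_real w) w' \<longrightarrow>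
        (deriv (wp (of_real w) w') z)\<^sup>2
          = 4 * (wp (of_real w) w' z) ^ 3 - of_real g2 * wp (of_real w) w' z - of_real g3"
  shows "(\<forall>x k :: real. complex_of_real k \<notin> lattice (of_real w) w' \<longrightarrow>
            Psi1 (of_real w) w' (of_real x) (of_real k) \<in> \<real>)
       \<and> (\<forall>x k l :: real. complex_of_real k \<notin> lattice (of_real w) w'
            \<longrightarrow> complex_of_real l \<notin> lattice (of_real w) w'
            \<longrightarrow> complex_of_real (k + l) \<notin> lattice (of_real w) w' \<longrightarrow>
            Psi2 (of_real w) w' (of_real x) (of_real k) (of_real l) \<in> \<real>)"
proof -
  interpret rectangular_lattice w w'
    using w_pos w'_imag w'_pos by unfold_locales
  have "Psi1 (of_real w) w' (of_real x) (of_real k) \<in> \<real>" for x k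
    unfolding Psi1_def by (intro shifted_sigma_quotient_real sigma_of_real_real zeta_of_real_real)
  moreover have "Psi2 (of_real w) w' (of_real x) (of_real k) (of_real l) \<in> \<real>" for x k l
  proof -
    have Psi2_eq: "Psi2 (of_real w) w' (of_real x) (of_real k) (of_real l)
            = \<sigma> (of_real x + of_real (k + l) + w') / (\<sigma> (of_real x + w') * \<sigma> (of_real (k + l)))
              * exp (- (\<zeta> k + \<zeta> l) * of_real x - \<zeta> w' * of_real (k + l))"
      by (simp add: Psi2_def add.assoc)
    show ?thesis
      unfolding Psi2_eq
      by (intro shifted_sigma_quotient_real sigma_of_real_real Reals_add zeta_of_real_real)
  qed
  ultimately show ?thesis
    by blast
qed

end
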